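(* Let $D^1$ and $D^2$ be compatible POMDPs. A policy $\pi$ is Pareto optimal for the pair $(D^1,D^2)$ if and only if there exist weights $w^1,w^2\ge0$ with $w^1+w^2=1$ such that $\pi$ is an optimal policy (i.e. maximizes $\mathbb E[U;\pi]$ over all policies) for the single POMDP mixture $w^1D^1+w^2D^2$.
   Context: For $j\in\{1,2\}$, $D^j=(\mathcal S^j,\mathcal A,T^j,U^j,\mathcal O,\Omega^j,n)$ is a POMDP: finite state set $\mathcal S^j$, finite action set $\mathcal A$, finite observation set $\mathcal O$, $n$ time steps, initial distribution $\mathbb P^j(s_1)$, transitions $\mathbb P^j(s_{i+1}\mid s_i,a_i)$, observation probabilities $\mathbb P^j(o_i\mid s_i)$, utility $U^j:(\mathcal S^j)^n\to\mathbb R$. Compatible means same $\mathcal A$, $\mathcal O$, $n$. A policy $\pi=(\pi_1,\dots,\pi_n)$ gives distributions $\pi_i(\cdot\mid o_{\le i},a_{<i})$ on $\mathcal A$; $\mathbb P^j(\bar s,\bar o,\bar a;\pi)=\mathbb P^j(s_1)\prod_{i=1}^n\mathbb P^j(o_i\mid s_i)\pi_i(a_i\mid o_{\le i},a_{<i})\mathbb P^j(s_{i+1}\mid s_i,a_i)$ and $\mathbb E^j[U^j;\pi]=\sum_{\bar s}\mathbb P^j(\bar s;\pi)U^j(\bar s)$. The policy class is closed under mixtures: for policies $\pi_k$ and convex weights $\alpha_k$, $\sum_k\alpha_k\pi_k$ chooses once and for all before any input, with probability $\alpha_k$, to follow $\pi_k$, so that $\mathbb E^j[U^j;\sum_k\alpha_k\pi_k]=\sum_k\alpha_k\mathbb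 E^j[U^j;\pi_k]$. A policy $\pi$ is Pareto optimal for $(D^1,D^2)$ if for every policy $\pi'$, $\mathbb E^1[U^1;\pi]\ge\mathbb E^1[U^1;\pi']$ or $\mathbb E^2[U^2;\pi]\ge\mathbb E^2[U^2;\pi']$. The mixture $D=w^1D^1+w^2D^2$ is the POMDP with the same $\mathcal A,\mathcal O,n$, state set $\mathcal S=\{(j,s):j\in\{1,2\},s\in\mathcal S^j\}$, initial distribution $\mathbb P((j,s_1))=w^j\mathbb P^j(s_1)$, transitions $\mathbb P((j',s_{i+1})\mid(j,s_i),a_i)=\mathbb P^j(s_{i+1}\mid s_i,a_i)$ if $j'=j$ and $0$ otherwise (so $j$ is constant along a history), observation probabilities $\mathbb P(o_i\mid(j,s_i))=\mathbb P^j(o_i\mid s_i)$ (the policy does not observe $j$), and utility $U(j,\bar s)=U^j(\bar s)$. *)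

theory Defs
  imports Complex_Main
begin

text \<open>A finite-horizon POMDP.  The finite state set, action set and observation set
  are the (finite) types 's, 'a, 'o.  Time steps are indexed 0,...,n-1 (paper: 1,...,n).\<close>

record ('s, 'a, 'o) pomdp =
  init    :: "'s \<Rightarrow> real"
  trans   :: "'s \<Rightarrow> 'a \<Rightarrow> 's \<Rightarrow> real"
  obsp    :: "'s \<Rightarrow> 'o \<Rightarrow> real"
  util    :: "'s list \<Rightarrow> real"           \<comment> \<open>U on S^n (lists of length n)\<close>
  horizon :: nat

definition is_pomdp :: "('s::finite, 'a::finite, 'o::finite) pomdp \<Rightarrow> bool" where
  "is_pomdp D \<longleftrightarrow>
     (\<forall>s. init D s \<ge> 0) \<and> (\<Sum>s\<in>UNIV. init D s) = 1 \<and>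
     (\<forall>s a s'. trans D s a s' \<ge> 0) \<and> (\<forall>s a. (\<Sum>s'\<in>UNIV. trans D s a s') = 1) \<and>
     (\<forall>s o'. obsp D s o' \<ge> 0) \<and> (\<forall>s. (\<Sum>o'\<in>UNIV. obsp D s o') = 1)"

text \<open>Compatible: same action and observation sets (enforced by the types) and same n.\<close>
definition compatible :: "('s1, 'a, 'o) pomdp \<Rightarrow> ('s2, 'a, 'o) pomdp \<Rightarrow> bool" where
  "compatible D1 D2 \<longleftrightarrow> horizon D1 = horizon D2"

text \<open>A policy: \<open>\<pi> i os as a\<close> is \<open>\<pi>_i(a | o_{\<le>i}, a_{<i})\<close>, where \<open>os\<close> is the list of
  observations so far (length i+1) and \<open>as\<close> the list of previous actions (length i).\<close>
type_synonym ('o, 'a) policy = "nat \<Rightarrow> 'o list \<Rightarrow> 'a list \<Rightarrow> 'a \<Rightarrow> real"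

definition is_policy :: "nat \<Rightarrow> ('o, 'a::finite) policy \<Rightarrow> bool" where
  "is_policy n \<pi> \<longleftrightarrow>
     (\<forall>i<n. \<forall>os as. (\<forall>a. \<pi> i os as a \<ge> 0) \<and> (\<Sum>a\<in>UNIV. \<pi> i os as a) = 1)"

definition joint_prob ::
  "('s, 'a, 'o) pomdp \<Rightarrow> ('o, 'a) policy \<Rightarrow> 's list \<Rightarrow> 'o list \<Rightarrow> 'a list \<Rightarrow> real" where
  "joint_prob D \<pi> ss os as =
     init D (ss ! 0) *
     (\<Prod>i<horizon D. obsp D (ss ! i) (os ! i) * \<pi> i (take (Suc i) os) (take i as) (as ! i)
                     * trans D (ss ! i) (as ! i) (ss ! Suc i))"

text \<open>\<open>E[U;\<pi>] = \<Sum>_{s\<^sub>1..s\<^sub>n} P(s\<^sub>1..s\<^sub>n;\<pi>) U(s\<^sub>1..s\<^sub>n)\<close>, where the marginal is obtained by summing the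
  joint probability over observations, actions and the final state s_{n+1}.\<close>
definition expected_util :: "('s::finite, 'a::finite, 'o::finite) pomdp \<Rightarrow> ('o, 'a) policy \<Rightarrow> real" where
  "expected_util D \<pi> =
     (\<Sum>ss\<in>{ss. length ss = Suc (horizon D)}.
       \<Sum>os\<in>{os. length os = horizon D}.
         \<Sum>as\<in>{as. length as = horizon D}.
           joint_prob D \<pi> ss os as * util D (take (horizon D) ss))"

definition pareto_optimal ::
  "('s1::finite, 'a::finite, 'o::finite) pomdp \<Rightarrow> ('s2::finite, 'a, 'o) pomdp \<Rightarrow> ('o, 'a) policy \<Rightarrow> bool" where
  "pareto_optimal D1 D2 \<pi> \<longleftrightarrow>
     (\<forall>\<pi>'. is_policy (horizon D1) \<pi>' \<longrightarrow>
        expected_util D1 \<pi> \<ge> expected_util D1 \<pi>' \<or> expected_util D2 \<pi> \<ge> expected_util D2 \<pi>')"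

definition optimal_policy :: "('s::finite, 'a::finite, 'o::finite) pomdp \<Rightarrow> ('o, 'a) policy \<Rightarrow> bool" where
  "optimal_policy D \<pi> \<longleftrightarrow>
     (\<forall>\<pi>'. is_policy (horizon D) \<pi>' \<longrightarrow> expected_util D \<pi> \<ge> expected_util D \<pi>')"

text \<open>The state set \<open>{(j,s)}\<close> is the sum type 's1 + 's2
  (Inl = index 1, Inr = index 2).  Utility of a history with constant index j is U^j of the
  underlying states; histories mixing indices have probability 0 and get utility 0.\<close>
definition mix_util :: "('s1 list \<Rightarrow> real) \<Rightarrow> ('s2 list \<Rightarrow> real) \<Rightarrow> ('s1 + 's2) list \<Rightarrow> real" where
  "mix_util U1 U2 xs =
     (if \<forall>x\<in>set xs. isl x then U1 (map projl xs)
      else if \<forall>x\<in>set xs. \<not> isl x then U2 (map projr xs) else 0)"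

definition mixture ::
  "real \<Rightarrow> ('s1, 'a, 'o) pomdp \<Rightarrow> real \<Rightarrow> ('s2, 'a, 'o) pomdp \<Rightarrow> ('s1 + 's2, 'a, 'o) pomdp" where
  "mixture w1 D1 w2 D2 =
     \<lparr> init = case_sum (\<lambda>s. w1 * init D1 s) (\<lambda>s. w2 * init D2 s),
       trans = (\<lambda>x a y. case (x, y) of
                   (Inl s, Inl s') \<Rightarrow> trans D1 s a s'
                 | (Inr s, Inr s') \<Rightarrow> trans D2 s a s'
                 | _ \<Rightarrow> 0),
       obsp = case_sum (obsp D1) (obsp D2),
       util = mix_util (util D1) (util D2),
       horizon = horizon D1 \<rparr>"

end

theory Submission
  imports Defs "HOL-Analysis.Analysis"
begin

text \<open>Expected utility is affine along mixtures of policies, and a mixture \<open>t p + (1 - t) q\<close> of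
  behavioural policies is again realised by a behavioural policy: at each step it weights the two
  components by the probability each assigns to the actions taken so far.  Hence the set of
  achievable pairs \<open>(E\<^sup>1[U\<^sup>1;p], E\<^sup>2[U\<^sup>2;p])\<close> is convex.  A point of a convex planar set that
  is not strictly dominated is separated from the open quadrant above it by a line, whose normal
  is nonnegative and, normalised, yields the weights; conversely a maximiser of a convex
  combination with weights summing to 1 cannot be strictly dominated.  Finally the expected utility
  of \<open>w\<^sup>1 D\<^sup>1 + w\<^sup>2 D\<^sup>2\<close> is \<open>w\<^sup>1 E\<^sup>1 + w\<^sup>2 E\<^sup>2\<close>, since histories that switch component have
  probability 0.\<close>

lemma le_add_mult_pos_imp_nonneg_le:
  fixes c k m :: real
  assumes le: "\<And>e. e > 0 \<Longrightarrow> c \<le> k + m * e"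
  shows "m \<ge> 0 \<and> c \<le> k"
proof -
  have "m \<ge> 0"
  proof (rule ccontr)
    assume "\<not> m \<ge> 0"
    then have "m * ((\<bar>c\<bar> + \<bar>k\<bar> + 1) / - m) = - (\<bar>c\<bar> + \<bar>k\<bar> + 1)" by simp
    with le[of "(\<bar>c\<bar> + \<bar>k\<bar> + 1) / - m"] \<open>\<not> m \<ge> 0\<close> show False
      by (simp add: divide_pos_neg)
  qed
  moreover have "c \<le> k"
  proof (rule field_le_epsilon)
    fix e :: real assume "e > 0"
    have "m * (e / (m + 1)) \<le> e"
      using \<open>m \<ge> 0\<close> \<open>e > 0\<close> by (simp add: field_simps)
    then show "c \<le> k + e"
      using le[of "e / (m + 1)"] \<open>m \<ge> 0\<close> \<open>e > 0\<close> by simp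
  qed
  ultimately show ?thesis ..
qed

lemma undominated_iff_supporting_weights:
  fixes S :: "(real \<times> real) set"
  assumes "convex S"
  shows "(\<forall>(x, y)\<in>S. x \<le> a \<or> y \<le> b) \<longleftrightarrow>
         (\<exists>w1 w2. w1 \<ge> 0 \<and> w2 \<ge> 0 \<and> w1 + w2 = 1 \<and>
                  (\<forall>(x, y)\<in>S. w1 * x + w2 * y \<le> w1 * a + w2 * b))"
proof
  assume undominated: "\<forall>(x, y)\<in>S. x \<le> a \<or> y \<le> b"
  show "\<exists>w1 w2. w1 \<ge> 0 \<and> w2 \<ge> 0 \<and> w1 + w2 = 1 \<and>
          (\<forall>(x, y)\<in>S. w1 * x + w2 * y \<le> w1 * a + w2 * b)"
  proof (cases "S = {}")
    case True
    then show ?thesis by (intro exI[of _ 1] exI[of _ 0]) simp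
  next
    case False
    define T where "T = {a<..} \<times> {b<..}"
    have "convex T"
      unfolding T_def by (intro convex_Times convex_real_interval)
    moreover have "T \<noteq> {}" "S \<inter> T = {}"
      using undominated by (auto simp: T_def intro!: exI[of _ "(a + 1, b + 1)"])
    ultimately obtain w c where "w \<noteq> 0" and below: "\<forall>z\<in>S. inner w z \<le> c"
        and above: "\<forall>z\<in>T. c \<le> inner w z"
      using separating_hyperplane_sets[OF assms] False by metis
    obtain w1 w2 where w: "w = (w1, w2)" by fastforce
    have above': "c \<le> (w1 * a + w2 * b) + (w1 * e1 + w2 * e2)" if "e1 > 0" "e2 > 0" for e1 e2
    proof -
      have "(a + e1, b + e2) \<in> T" using that by (simp add: T_def)
      then show ?thesis using above by (auto simp: w algebra_simps)
    qed
    have "w1 \<ge> 0" "w2 \<ge> 0" "c \<le> w1 * a + w2 * b"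
      using le_add_mult_pos_imp_nonneg_le[of c "w1 * a + w2 * b + w2" w1]
        le_add_mult_pos_imp_nonneg_le[of c "w1 * a + w2 * b + w1" w2]
        le_add_mult_pos_imp_nonneg_le[of c "w1 * a + w2 * b" "w1 + w2"]
        above'[of _ 1] above'[of 1] above'[of e e for e]
      by (auto simp: algebra_simps)
    have "w1 + w2 > 0"
      using \<open>w \<noteq> 0\<close> \<open>w1 \<ge> 0\<close> \<open>w2 \<ge> 0\<close> by (auto simp: w zero_prod_def)
    have "w1 * x + w2 * y \<le> w1 * a + w2 * b" if "(x, y) \<in> S" for x y
      using below that \<open>c \<le> w1 * a + w2 * b\<close> by (fastforce simp: w)
    then have "w1 / (w1 + w2) * x + w2 / (w1 + w2) * y \<le> w1 / (w1 + w2) * a + w2 / (w1 + w2) * b"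
      if "(x, y) \<in> S" for x y
      using that \<open>w1 + w2 > 0\<close> by (simp add: add_divide_distrib[symmetric] divide_right_mono)
    then show ?thesis
      using \<open>w1 \<ge> 0\<close> \<open>w2 \<ge> 0\<close> \<open>w1 + w2 > 0\<close>
      by (intro exI[of _ "w1 / (w1 + w2)"] exI[of _ "w2 / (w1 + w2)"]) (auto simp: add_divide_distrib[symmetric])
  qed
next
  assume "\<exists>w1 w2. w1 \<ge> 0 \<and> w2 \<ge> 0 \<and> w1 + w2 = 1 \<and>
            (\<forall>(x, y)\<in>S. w1 * x + w2 * y \<le> w1 * a + w2 * b)"
  then obtain w1 w2 where w: "w1 \<ge> 0" "w2 \<ge> 0" "w1 + w2 = 1"
    and supp: "\<forall>(x, y)\<in>S. w1 * x + w2 * y \<le> w1 * a + w2 * b" by blast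
  show "\<forall>(x, y)\<in>S. x \<le> a \<or> y \<le> b"
  proof (rule ccontr)
    assume "\<not> (\<forall>(x, y)\<in>S. x \<le> a \<or> y \<le> b)"
    then obtain x y where "(x, y) \<in> S" "\<not> x \<le> a" "\<not> y \<le> b" by blast
    then have "a < x" "b < y" by simp_all
    have "w1 * (x - a) + w2 * (y - b) > 0"
    proof (cases "w1 = 0")
      case False
      with w \<open>a < x\<close> \<open>b < y\<close> have "w1 * (x - a) > 0" "w2 * (y - b) \<ge> 0" by auto
      then show ?thesis by linarith
    qed (use w \<open>b < y\<close> in auto)
    then show False
      using supp \<open>(x, y) \<in> S\<close> by (auto simp: algebra_simps)
  qed
qed

definition policy_prob :: "('o, 'a) policy \<Rightarrow> nat \<Rightarrow> 'o list \<Rightarrow> 'a list \<Rightarrow> real" where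
  "policy_prob p k os as = (\<Prod>i<k. p i (take (Suc i) os) (take i as) (as ! i))"

text \<open>On histories unreachable under both components the choice of \<open>p\<close> is arbitrary.\<close>

definition policy_mix :: "real \<Rightarrow> ('o, 'a) policy \<Rightarrow> ('o, 'a) policy \<Rightarrow> ('o, 'a) policy" where
  "policy_mix t p q i os as a =
     (if t * policy_prob p i os as + (1 - t) * policy_prob q i os as = 0 then p i os as a
      else (t * policy_prob p i os as * p i os as a + (1 - t) * policy_prob q i os as * q i os as a)
           / (t * policy_prob p i os as + (1 - t) * policy_prob q i os as))"

lemma policy_prob_Suc:
  "policy_prob p (Suc k) os as = policy_prob p k os as * p k (take (Suc k) os) (take k as) (as ! k)"
  by (simp add: policy_prob_def)

lemma policy_prob_take:
  "k \<le> m \<Longrightarrow> k \<le> m' \<Longrightarrow> policy_prob p k (take m os) (take m' as) = policy_prob p k os as"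
  unfolding policy_prob_def by (intro prod.cong refl) (simp add: min_def)

lemma policy_prob_nonneg: "is_policy n p \<Longrightarrow> k \<le> n \<Longrightarrow> policy_prob p k os as \<ge> 0"
  unfolding policy_prob_def is_policy_def by (intro prod_nonneg) auto

lemma policy_prob_policy_mix:
  assumes p: "is_policy n p" and q: "is_policy n q" and t: "0 \<le> t" "t \<le> 1" and "k \<le> n"
  shows "policy_prob (policy_mix t p q) k os as = t * policy_prob p k os as + (1 - t) * policy_prob q k os as"
  using \<open>k \<le> n\<close>
proof (induction k)
  case 0
  then show ?case by (simp add: policy_prob_def)
next
  case (Suc k)
  define P Q where "P = policy_prob p k os as" and "Q = policy_prob q k os as"
  define x y where "x = p k (take (Suc k) os) (take k as) (as ! k)"
    and "y = q k (take (Suc k) os) (take k as) (as ! k)"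
  have "P \<ge> 0" "Q \<ge> 0"
    using policy_prob_nonneg[OF p] policy_prob_nonneg[OF q] Suc.prems by (auto simp: P_def Q_def)
  have mix_step: "policy_mix t p q k (take (Suc k) os) (take k as) (as ! k) =
      (if t * P + (1 - t) * Q = 0 then x else (t * P * x + (1 - t) * Q * y) / (t * P + (1 - t) * Q))"
    by (simp add: policy_mix_def policy_prob_take P_def Q_def x_def y_def)
  have "policy_prob (policy_mix t p q) (Suc k) os as =
      (t * P + (1 - t) * Q) * policy_mix t p q k (take (Suc k) os) (take k as) (as ! k)"
    using Suc by (simp add: policy_prob_Suc P_def Q_def)
  also have "\<dots> = t * (P * x) + (1 - t) * (Q * y)"
  proof (cases "t * P + (1 - t) * Q = 0")
    case True
    with \<open>P \<ge> 0\<close> \<open>Q \<ge> 0\<close> t have "t * P = 0" "(1 - t) * Q = 0"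
      by (smt (verit) mult_nonneg_nonneg)+
    then have "t * (P * x) = 0" "(1 - t) * (Q * y) = 0"
      by (metis mult.assoc mult_zero_left)+
    then show ?thesis by (simp only: mix_step True if_True simp_thms mult_zero_left add_0)
  qed (simp add: mix_step)
  finally show ?case by (simp add: policy_prob_Suc P_def Q_def x_def y_def)
qed

lemma is_policy_policy_mix:
  assumes p: "is_policy n p" and q: "is_policy n q" and t: "0 \<le> t" "t \<le> 1"
  shows "is_policy n (policy_mix t p q)"
  unfolding is_policy_def
proof (intro allI impI conjI)
  fix i os as a assume "i < n"
  define P Q where "P = policy_prob p i os as" and "Q = policy_prob q i os as"
  have "P \<ge> 0" "Q \<ge> 0"
    using policy_prob_nonneg[OF p] policy_prob_nonneg[OF q] \<open>i < n\<close> by (auto simp: P_def Q_def)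
  have p_i: "\<And>a. p i os as a \<ge> 0" "(\<Sum>a\<in>UNIV. p i os as a) = 1"
    and q_i: "\<And>a. q i os as a \<ge> 0" "(\<Sum>a\<in>UNIV. q i os as a) = 1"
    using p q \<open>i < n\<close> unfolding is_policy_def by auto
  have mix: "policy_mix t p q i os as a =
      (if t * P + (1 - t) * Q = 0 then p i os as a
       else (t * P * p i os as a + (1 - t) * Q * q i os as a) / (t * P + (1 - t) * Q))" for a
    by (simp add: policy_mix_def P_def Q_def)
  show "policy_mix t p q i os as a \<ge> 0"
    using p_i q_i t \<open>P \<ge> 0\<close> \<open>Q \<ge> 0\<close> by (simp add: mix)
  show "(\<Sum>a\<in>UNIV. policy_mix t p q i os as a) = 1"
  proof (cases "t * P + (1 - t) * Q = 0")
    case False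
    have "(\<Sum>a\<in>UNIV. policy_mix t p q i os as a) =
        (t * P * (\<Sum>a\<in>UNIV. p i os as a) + (1 - t) * Q * (\<Sum>a\<in>UNIV. q i os as a)) / (t * P + (1 - t) * Q)"
      using False by (simp add: mix sum.distrib sum_distrib_left flip: sum_divide_distrib)
    with False show ?thesis by (simp add: p_i q_i)
  qed (simp add: mix p_i)
qed

lemma joint_prob_eq_policy_prob:
  "joint_prob D p ss os as =
     init D (ss ! 0) * (\<Prod>i<horizon D. obsp D (ss ! i) (os ! i) * trans D (ss ! i) (as ! i) (ss ! Suc i))
     * policy_prob p (horizon D) os as"
  unfolding joint_prob_def policy_prob_def by (simp add: prod.distrib[symmetric] mult_ac)

lemma expected_util_policy_mix:
  assumes "is_policy (horizon D) p" "is_policy (horizon D) q" "0 \<le> t" "t \<le> 1"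
  shows "expected_util D (policy_mix t p q) = t * expected_util D p + (1 - t) * expected_util D q"
proof -
  define C where "C ss os as = init D (ss ! 0) * util D (take (horizon D) ss) *
      (\<Prod>i<horizon D. obsp D (ss ! i) (os ! i) * trans D (ss ! i) (as ! i) (ss ! Suc i))" for ss os as
  have EU: "expected_util D r = (\<Sum>ss\<in>{ss. length ss = Suc (horizon D)}. \<Sum>os\<in>{os. length os = horizon D}.
      \<Sum>as\<in>{as. length as = horizon D}. policy_prob r (horizon D) os as * C ss os as)" for r
    unfolding expected_util_def joint_prob_eq_policy_prob C_def by (simp add: mult_ac)
  show ?thesis
    unfolding EU policy_prob_policy_mix[OF assms order_refl]
    by (simp add: ring_distribs sum.distrib sum_distrib_left mult.assoc)
qed

lemma exists_adjacent_change:
  assumes "x \<in> set xs" "P x" "y \<in> set xs" "\<not> P y"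
  shows "\<exists>i. Suc i < length xs \<and> P (xs ! i) \<noteq> P (xs ! Suc i)"
proof (rule ccontr)
  assume "\<not> ?thesis"
  then have "P (xs ! j) = P (xs ! 0)" if "j < length xs" for j
    using that by (induction j) auto
  with assms show False by (auto simp: in_set_conv_nth)
qed

lemma sum_lists_Plus:
  fixes F :: "('a::finite + 'b::finite) list \<Rightarrow> 'c::comm_monoid_add"
  assumes "m > 0"
    and mixed: "\<And>ss x y. length ss = m \<Longrightarrow> x \<in> set ss \<Longrightarrow> isl x \<Longrightarrow> y \<in> set ss \<Longrightarrow> \<not> isl y \<Longrightarrow> F ss = 0"
  shows "(\<Sum>ss\<in>{ss. length ss = m}. F ss) =
         (\<Sum>xs\<in>{xs. length xs = m}. F (map Inl xs)) + (\<Sum>ys\<in>{ys. length ys = m}. F (map Inr ys))"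
proof -
  let ?L = "{ss :: ('a + 'b) list. length ss = m}"
  let ?A = "map Inl ` {xs :: 'a list. length xs = m}" and ?B = "map Inr ` {ys :: 'b list. length ys = m}"
  have "finite ?L" "finite ?A" "finite ?B"
    using finite_lists_length_eq[of "UNIV :: ('a + 'b) set"] finite_lists_length_eq[of "UNIV :: 'a set"]
      finite_lists_length_eq[of "UNIV :: 'b set"] by auto
  have "F ss = 0" if "ss \<in> ?L - (?A \<union> ?B)" for ss
  proof -
    have "\<not> (\<forall>x\<in>set ss. isl x)"
    proof
      assume "\<forall>x\<in>set ss. isl x"
      then have "ss = map Inl (map projl ss)" by (simp add: map_idI)
      with that show False by (metis DiffE UnI1 image_eqI length_map mem_Collect_eq)
    qed
    moreover have "\<not> (\<forall>x\<in>set ss. \<not> isl x)"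
    proof
      assume "\<forall>x\<in>set ss. \<not> isl x"
      then have "ss = map Inr (map projr ss)" by (simp add: map_idI)
      with that show False by (metis DiffE UnI2 image_eqI length_map mem_Collect_eq)
    qed
    ultimately show ?thesis using mixed that by blast
  qed
  then have "sum F ?L = sum F (?A \<union> ?B)"
    by (intro sum.mono_neutral_right \<open>finite ?L\<close>) auto
  also have "\<dots> = sum F ?A + sum F ?B"
    using \<open>m > 0\<close> \<open>finite ?A\<close> \<open>finite ?B\<close> by (intro sum.union_disjoint) (auto simp: neq_Nil_conv)
  also have "\<dots> = (\<Sum>xs\<in>{xs. length xs = m}. F (map Inl xs)) + (\<Sum>ys\<in>{ys. length ys = m}. F (map Inr ys))"
    by (simp add: sum.reindex inj_on_def)
  finally show ?thesis .
qed

lemma mix_util_map_Inl: "mix_util U1 U2 (map Inl xs) = U1 xs"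
  by (simp add: mix_util_def comp_def)

lemma mix_util_map_Inr: "xs \<noteq> [] \<Longrightarrow> mix_util U1 U2 (map Inr xs) = U2 xs"
  by (cases xs) (auto simp: mix_util_def comp_def)

lemma joint_prob_mixture_Inl:
  assumes "length xs = Suc (horizon D1)"
  shows "joint_prob (mixture w1 D1 w2 D2) p (map Inl xs) os as = w1 * joint_prob D1 p xs os as"
proof -
  have "(\<Prod>i<horizon D1. obsp (mixture w1 D1 w2 D2) (map Inl xs ! i) (os ! i) *
          p i (take (Suc i) os) (take i as) (as ! i) *
          trans (mixture w1 D1 w2 D2) (map Inl xs ! i) (as ! i) (map Inl xs ! Suc i)) =
        (\<Prod>i<horizon D1. obsp D1 (xs ! i) (os ! i) * p i (take (Suc i) os) (take i as) (as ! i) *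
          trans D1 (xs ! i) (as ! i) (xs ! Suc i))"
    using assms by (intro prod.cong refl) (simp add: mixture_def)
  with assms show ?thesis by (simp add: joint_prob_def mixture_def)
qed

lemma joint_prob_mixture_Inr:
  assumes "length ys = Suc (horizon D2)" "horizon D2 = horizon D1"
  shows "joint_prob (mixture w1 D1 w2 D2) p (map Inr ys) os as = w2 * joint_prob D2 p ys os as"
proof -
  have "(\<Prod>i<horizon D1. obsp (mixture w1 D1 w2 D2) (map Inr ys ! i) (os ! i) *
          p i (take (Suc i) os) (take i as) (as ! i) *
          trans (mixture w1 D1 w2 D2) (map Inr ys ! i) (as ! i) (map Inr ys ! Suc i)) =
        (\<Prod>i<horizon D2. obsp D2 (ys ! i) (os ! i) * p i (take (Suc i) os) (take i as) (as ! i) *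
          trans D2 (ys ! i) (as ! i) (ys ! Suc i))"
    using assms by (intro prod.cong) (simp_all add: mixture_def)
  with assms show ?thesis by (simp add: joint_prob_def mixture_def)
qed

lemma joint_prob_mixture_mixed:
  assumes "length ss = Suc (horizon D1)" "x \<in> set ss" "isl x" "y \<in> set ss" "\<not> isl y"
  shows "joint_prob (mixture w1 D1 w2 D2) p ss os as = 0"
proof -
  obtain i where i: "Suc i < length ss" "isl (ss ! i) \<noteq> isl (ss ! Suc i)"
    using exists_adjacent_change[OF assms(2-5)] by blast
  then have "trans (mixture w1 D1 w2 D2) (ss ! i) (as ! i) (ss ! Suc i) = 0"
    by (cases "ss ! i"; cases "ss ! Suc i") (auto simp: mixture_def)
  with i assms(1) show ?thesis
    by (auto simp: joint_prob_def mixture_def intro!: prod_zero)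
qed

lemma horizon_mixture [simp]: "horizon (mixture w1 D1 w2 D2) = horizon D1"
  by (simp add: mixture_def)

lemma util_mixture [simp]: "util (mixture w1 D1 w2 D2) = mix_util (util D1) (util D2)"
  by (simp add: mixture_def)

lemma expected_util_mixture:
  fixes D1 :: "('s1::finite, 'a::finite, 'o::finite) pomdp" and D2 :: "('s2::finite, 'a, 'o) pomdp"
  assumes "horizon D2 = horizon D1"
    and "horizon D1 > 0" \<comment> \<open>for horizon 0, \<open>mix_util\<close> reads the empty history as one of \<open>D\<^sup>1\<close>\<close>
  shows "expected_util (mixture w1 D1 w2 D2) p = w1 * expected_util D1 p + w2 * expected_util D2 p"
proof -
  let ?n = "horizon D1" and ?D = "mixture w1 D1 w2 D2"
  define F where "F ss = (\<Sum>os\<in>{os. length os = ?n}. \<Sum>as\<in>{as. length as = ?n}.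
      joint_prob ?D p ss os as * util ?D (take ?n ss))" for ss
  have "expected_util ?D p = (\<Sum>ss\<in>{ss. length ss = Suc ?n}. F ss)"
    by (simp add: expected_util_def F_def)
  also have "\<dots> = (\<Sum>xs\<in>{xs. length xs = Suc ?n}. F (map Inl xs)) +
      (\<Sum>ys\<in>{ys. length ys = Suc ?n}. F (map Inr ys))"
    by (rule sum_lists_Plus) (auto simp: F_def joint_prob_mixture_mixed)
  also have "(\<Sum>xs\<in>{xs. length xs = Suc ?n}. F (map Inl xs)) = w1 * expected_util D1 p"
    by (simp add: F_def expected_util_def joint_prob_mixture_Inl take_map
        mix_util_map_Inl sum_distrib_left mult.assoc)
  also have "(\<Sum>ys\<in>{ys. length ys = Suc ?n}. F (map Inr ys)) = w2 * expected_util D2 p"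
  proof -
    have "mix_util (util D1) (util D2) (map Inr (take ?n ys)) = util D2 (take ?n ys)"
      if "length ys = Suc ?n" for ys :: "'s2 list"
      using that assms(2) by (intro mix_util_map_Inr) auto
    then show ?thesis
      using assms(1) by (simp add: F_def expected_util_def joint_prob_mixture_Inr take_map
          sum_distrib_left mult.assoc)
  qed
  finally show ?thesis .
qed

lemma expected_util_horizon_0: "horizon D = 0 \<Longrightarrow> expected_util D p = expected_util D q"
  by (simp add: expected_util_def joint_prob_def)

lemma convex_expected_util_pairs:
  assumes "horizon D2 = horizon D1"
  shows "convex ((\<lambda>p. (expected_util D1 p, expected_util D2 p)) ` {p. is_policy (horizon D1) p})"
    (is "convex ?S")
proof (rule convexI)
  fix x y and u v :: real
  assume "x \<in> ?S" and "y \<in> ?S"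
    and "0 \<le> u" "0 \<le> v" "u + v = 1"
  then obtain p q where p: "is_policy (horizon D1) p" "x = (expected_util D1 p, expected_util D2 p)"
    and q: "is_policy (horizon D1) q" "y = (expected_util D1 q, expected_util D2 q)"
    and v: "v = 1 - u" "u \<le> 1" by auto
  have "u *\<^sub>R x + v *\<^sub>R y = (expected_util D1 (policy_mix u p q), expected_util D2 (policy_mix u p q))"
    using p q v \<open>0 \<le> u\<close> assms by (simp add: expected_util_policy_mix)
  moreover have "is_policy (horizon D1) (policy_mix u p q)"
    using p q v \<open>0 \<le> u\<close> by (intro is_policy_policy_mix)
  ultimately show "u *\<^sub>R x + v *\<^sub>R y \<in> ?S" by auto
qed

theorem lemma2:
  fixes D1 :: "('s1::finite, 'a::finite, 'o::finite) pomdp"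
    and D2 :: "('s2::finite, 'a, 'o) pomdp"
    and \<pi> :: "('o, 'a) policy"
  assumes "is_pomdp D1" and "is_pomdp D2" and "compatible D1 D2"
    and "is_policy (horizon D1) \<pi>"
  shows "pareto_optimal D1 D2 \<pi> \<longleftrightarrow>
         (\<exists>w1 w2. w1 \<ge> 0 \<and> w2 \<ge> 0 \<and> w1 + w2 = 1 \<and>
                  optimal_policy (mixture w1 D1 w2 D2) \<pi>)"
proof -
  have h: "horizon D2 = horizon D1"
    using assms(3) by (simp add: compatible_def)
  show ?thesis
  proof (cases "horizon D1 = 0")
    case True
    then have "pareto_optimal D1 D2 \<pi>" "optimal_policy (mixture 1 D1 0 D2) \<pi>"
      unfolding pareto_optimal_def optimal_policy_def
      using expected_util_horizon_0[of D1 _ \<pi>] expected_util_horizon_0[of "mixture 1 D1 0 D2" _ \<pi>]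
      by (metis horizon_mixture order_refl)+
    then show ?thesis by force
  next
    case False
    let ?S = "(\<lambda>p. (expected_util D1 p, expected_util D2 p)) ` {p. is_policy (horizon D1) p}"
    have "pareto_optimal D1 D2 \<pi> \<longleftrightarrow>
        (\<forall>(x, y)\<in>?S. x \<le> expected_util D1 \<pi> \<or> y \<le> expected_util D2 \<pi>)"
      by (auto simp: pareto_optimal_def)
    also have "\<dots> \<longleftrightarrow> (\<exists>w1 w2. w1 \<ge> 0 \<and> w2 \<ge> 0 \<and> w1 + w2 = 1 \<and>
        (\<forall>(x, y)\<in>?S. w1 * x + w2 * y \<le> w1 * expected_util D1 \<pi> + w2 * expected_util D2 \<pi>))"
      by (rule undominated_iff_supporting_weights[OF convex_expected_util_pairs[OF h]])
    also have "\<dots> \<longleftrightarrow> (\<exists>w1 w2. w1 \<ge> 0 \<and> w2 \<ge> 0 \<and> w1 + w2 = 1 \<and>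
        optimal_policy (mixture w1 D1 w2 D2) \<pi>)"
      using False h by (simp add: optimal_policy_def expected_util_mixture)
    finally show ?thesis .
  qed
qed

end
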